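(* For no $\lambda\in\mathbb{C}$ does the equation $-w''(x)+P(x)w(x)=\lambda w(x)$ on $(0,\infty)$ have a nonzero solution $w\in L^2(0,\infty)$. In particular the self-adjoint operator $A=-\frac{d^2}{dx^2}+P(x)$ on $L^2(0,\infty)$, with domain $\{w\in L^2(0,\infty): w,w'\text{ locally absolutely continuous},\ Aw\in L^2(0,\infty)\}$, has no eigenvalues.
   Context: $P(x)=\dfrac{e^{4x}+10e^{2x}+1}{4(e^{2x}-1)^2}$ for $x>0$. *)

theory Defs
  imports "HOL-Analysis.Analysis"
begin

definition P :: "real \<Rightarrow> real" where
  "P x = (exp (4*x) + 10 * exp (2*x) + 1) / (4 * (exp (2*x) - 1)^2)"

end

theory Submission
  imports Defs "HOL-Real_Asymp.Real_Asymp"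
begin

text \<open>Let \<open>w\<close> be a square-integrable solution and \<open>h = cnj w * w'\<close>. Then
  \<open>(Re h)' = |w'|\<^sup>2 + (P - Re \<lambda>) |w|\<^sup>2\<close> and \<open>(Im h)' = - Im \<lambda> |w|\<^sup>2\<close>, and square integrability
  prevents \<open>|h|\<close> from staying bounded away from \<open>0\<close> near \<open>\<infinity>\<close> (where \<open>\<integral>|w|\<^sup>2 + |w'|\<^sup>2\<close>
  would grow linearly) and near \<open>0\<close>: there the Wronskian \<open>g\<close> of \<open>w\<close> with the zero-energy
  solution \<open>sinh\<^sup>-\<^sup>1\<^sup>/\<^sup>2\<close> grows only logarithmically, so \<open>w sinh\<^sup>1\<^sup>/\<^sup>2 = o(x)\<close> (otherwise
  \<open>|w|\<^sup>2 \<ge> c/x\<close>), which makes \<open>h\<close> small.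

  If \<open>Im \<lambda> \<noteq> 0\<close> or \<open>Re \<lambda> \<le> 1/4\<close> (note \<open>P > 1/4\<close>), a multiple of \<open>Im h\<close> resp. \<open>Re h\<close> is
  monotone, strictly so where \<open>w \<noteq> 0\<close>, and its sign forces one of these two lower bounds.
  For real \<open>\<lambda> > 1/4\<close>, the energy \<open>(\<lambda> - 1/4) |w|\<^sup>2 + |w'|\<^sup>2\<close> has logarithmic derivative
  \<open>O(1/sinh\<^sup>2)\<close>, integrable at \<open>\<infinity>\<close>, so by Gronwall it stays between positive constants; then
  \<open>Re h + 2 (\<lambda> - 1/4) \<integral>|w|\<^sup>2\<close> grows linearly while \<open>h\<close> stays bounded.\<close>

lemma DERIV_nonneg_imp_le:
  fixes F F' :: "real \<Rightarrow> real"
  assumes "a \<le> b"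
    and "\<And>x. x \<in> {a..b} \<Longrightarrow> (F has_real_derivative F' x) (at x within {a..b})"
    and "\<And>x. a < x \<Longrightarrow> x < b \<Longrightarrow> 0 \<le> F' x"
  shows "F a \<le> F b"
proof (rule DERIV_nonneg_imp_increasing_open[OF assms(1)])
  show "continuous_on {a..b} F"
    by (rule DERIV_continuous_on[OF assms(2)])
  fix x assume x: "a < x" "x < b"
  then have "(F has_real_derivative F' x) (at x)"
    using assms(2)[of x] at_within_interior[of x "{a..b}"] by (simp add: interior_atLeastAtMost_real)
  then show "\<exists>y. (F has_real_derivative y) (at x) \<and> 0 \<le> y"
    using assms(3) x by blast
qed

lemma gronwall_two_sided:
  fixes E Q \<theta> q :: "real \<Rightarrow> real"
  assumes "a \<le> t"
    and E: "\<And>x. x \<in> {a..t} \<Longrightarrow> (E has_real_derivative Q x) (at x)"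
    and \<theta>: "\<And>x. x \<in> {a..t} \<Longrightarrow> (\<theta> has_real_derivative - q x) (at x)"
    and Q: "\<And>x. x \<in> {a..t} \<Longrightarrow> \<bar>Q x\<bar> \<le> q x * E x"
    and "0 \<le> E t" "0 \<le> \<theta> t"
  shows "E a * exp (- \<theta> a) \<le> E t" "E t \<le> E a * exp (\<theta> a)"
proof -
  have "E a * exp (- \<theta> a) \<le> E t * exp (- \<theta> t)"
  proof (rule DERIV_nonneg_imp_le[OF assms(1)])
    fix x assume x: "x \<in> {a..t}"
    show "((\<lambda>x. E x * exp (- \<theta> x)) has_real_derivative
        exp (- \<theta> x) * (Q x + q x * E x)) (at x within {a..t})"
      by (auto intro!: derivative_eq_intros has_field_derivative_at_within[OF E[OF x]]
          has_field_derivative_at_within[OF \<theta>[OF x]] simp: algebra_simps)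
  next
    fix x assume "a < x" "x < t"
    then have x: "x \<in> {a..t}" by simp
    have "0 \<le> Q x + q x * E x" using Q[OF x] by linarith
    then show "0 \<le> exp (- \<theta> x) * (Q x + q x * E x)" by simp
  qed
  also have "\<dots> \<le> E t" using assms(5,6) by (simp add: mult_left_le)
  finally show "E a * exp (- \<theta> a) \<le> E t" .
  have "(\<lambda>x. - (E x * exp (\<theta> x))) a \<le> (\<lambda>x. - (E x * exp (\<theta> x))) t"
  proof (rule DERIV_nonneg_imp_le[OF assms(1)])
    fix x assume x: "x \<in> {a..t}"
    show "((\<lambda>x. - (E x * exp (\<theta> x))) has_real_derivative
        exp (\<theta> x) * (q x * E x - Q x)) (at x within {a..t})"
      by (auto intro!: derivative_eq_intros has_field_derivative_at_within[OF E[OF x]]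
          has_field_derivative_at_within[OF \<theta>[OF x]] simp: algebra_simps)
  next
    fix x assume "a < x" "x < t"
    then have x: "x \<in> {a..t}" by simp
    have "0 \<le> q x * E x - Q x" using Q[OF x] by linarith
    then show "0 \<le> exp (\<theta> x) * (q x * E x - Q x)" by simp
  qed
  moreover have "E t \<le> E t * exp (\<theta> t)" using assms(5,6) by (simp add: mult_le_cancel_left1)
  ultimately show "E t \<le> E a * exp (\<theta> a)" by simp
qed

lemma exists_gt_linear:
  fixes c C a :: real
  assumes "0 < c"
  shows "\<exists>t\<ge>a. C < c * (t - a)"
proof (intro exI conjI)
  show "a \<le> a + \<bar>C\<bar> / c + 1" using assms by simp
  have "c * (a + \<bar>C\<bar> / c + 1 - a) = \<bar>C\<bar> + c" using assms by (simp add: field_simps)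
  then show "C < c * (a + \<bar>C\<bar> / c + 1 - a)" using assms by linarith
qed

lemma integral_has_real_derivative_pos:
  fixes f :: "real \<Rightarrow> real"
  assumes "continuous_on {0<..} f" "0 < a" "x \<in> {a..b}"
  shows "((\<lambda>t. integral {a..t} f) has_real_derivative f x) (at x within {a..b})"
proof (rule integral_has_real_derivative[OF _ assms(3)])
  show "continuous_on {a..b} f"
    using assms(1) by (rule continuous_on_subset) (use assms(2) in auto)
qed

lemma integral_le_integral_pos:
  fixes f :: "real \<Rightarrow> real"
  assumes "continuous_on {0<..} f" "\<And>x. 0 < x \<Longrightarrow> 0 \<le> f x"
    and "set_integrable lborel {0<..} f" "0 < a"
  shows "integral {a..b} f \<le> integral {0<..} f"
proof (rule integral_subset_le)
  show "f integrable_on {a..b}"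
    by (rule integrable_continuous_interval, rule continuous_on_subset[OF assms(1)])
      (use assms(4) in auto)
  show "f integrable_on {0<..}"
    by (rule set_borel_integral_eq_integral(1)[OF assms(3)])
qed (use assms(2,4) in auto)

section \<open>The potential and its zero-energy solution\<close>

lemma sinh_ge_self:
  fixes t :: real
  assumes "0 \<le> t"
  shows "t \<le> sinh t"
proof -
  have "(\<lambda>x. sinh x - x) 0 \<le> (\<lambda>x. sinh x - x) t"
  proof (rule DERIV_nonneg_imp_le[OF assms])
    fix x
    show "((\<lambda>x. sinh x - x) has_real_derivative cosh x - 1) (at x within {0..t})"
      by (auto intro!: derivative_eq_intros)
    show "0 \<le> cosh x - 1"
      using cosh_real_ge_1[of x] by simp
  qed
  then show ?thesis by simp
qed

lemma sinh_le_mult_cosh: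
  fixes t :: real
  assumes "0 \<le> t"
  shows "sinh t \<le> t * cosh t"
proof -
  have "(\<lambda>x. x * cosh x - sinh x) 0 \<le> (\<lambda>x. x * cosh x - sinh x) t"
  proof (rule DERIV_nonneg_imp_le[OF assms])
    fix x
    show "((\<lambda>x. x * cosh x - sinh x) has_real_derivative x * sinh x) (at x within {0..t})"
      by (auto intro!: derivative_eq_intros)
    assume "0 < x"
    then show "0 \<le> x * sinh x" by simp
  qed
  then show ?thesis by simp
qed

lemma coth_has_real_derivative:
  fixes t :: real
  assumes "t \<noteq> 0"
  shows "((\<lambda>t. cosh t / sinh t) has_real_derivative - 1 / (sinh t)\<^sup>2) (at t)"
proof -
  have "sinh t \<noteq> 0" using assms by simp
  then have "((\<lambda>t. cosh t / sinh t) has_real_derivative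
      (sinh t * sinh t - cosh t * cosh t) / (sinh t)\<^sup>2) (at t)"
    by (auto intro!: derivative_eq_intros simp: power2_eq_square)
  moreover have "sinh t * sinh t - cosh t * cosh t = -1"
    using cosh_square_eq[of t] by (simp add: power2_eq_square)
  ultimately show ?thesis by simp
qed

lemma P_eq_sinh:
  assumes "0 < x"
  shows "P x = 1/4 + 3 / (4 * (sinh x)\<^sup>2)"
proof -
  define E where "E = exp x"
  have E1: "E > 1" using assms by (simp add: E_def)
  have e2: "exp (2*x) = E^2" "exp (4*x) = E^4" unfolding E_def
    by (simp_all add: exp_of_nat_mult[symmetric] mult.commute)
  have s: "sinh x = (E - inverse E)/2" by (simp add: E_def sinh_def exp_minus)
  have "E^2 > 1" using E1 by (simp add: one_less_power)
  then have q: "(E^2-1)^2 > 0" by simp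
  have d: "4 + E*(E*(E*(E*4))) - E*(E*8) = 4*(E^2-1)^2" by algebra
  have d2: "4 + E*(E*(E*(E*4))) - E*(E*8) \<noteq> 0" using d q by simp
  show ?thesis unfolding P_def e2 s using E1 q d2
    by (simp add: field_simps power2_eq_square) (simp add: algebra_simps power2_eq_square power4_eq_xxxx)
qed

lemma P_gt_quarter: "0 < x \<Longrightarrow> 1/4 < P x"
  by (simp add: P_eq_sinh)

lemma P_antimono:
  assumes "0 < x" "x \<le> y"
  shows "P y \<le> P x"
proof -
  have "0 < sinh x" "0 < sinh y" "sinh x \<le> sinh y" using assms by auto
  then have "(sinh x)\<^sup>2 \<le> (sinh y)\<^sup>2" by (intro power_mono) auto
  then have "3 / (4 * (sinh y)\<^sup>2) \<le> 3 / (4 * (sinh x)\<^sup>2)"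
    using \<open>0 < sinh x\<close> \<open>0 < sinh y\<close> by (intro divide_left_mono) auto
  then show ?thesis using assms by (simp add: P_eq_sinh)
qed

text \<open>\<open>rho = sinh\<^sup>-\<^sup>1\<^sup>/\<^sup>2\<close> solves \<open>-y'' + P y = 0\<close>.\<close>

definition rho :: "real \<Rightarrow> real" where
  "rho t = 1 / sqrt (sinh t)"

definition rho' :: "real \<Rightarrow> real" where
  "rho' t = - (cosh t / sinh t * rho t) / 2"

lemma rho_pos: "0 < t \<Longrightarrow> 0 < rho t"
  by (simp add: rho_def)

lemma rho_square: "0 < t \<Longrightarrow> (rho t)\<^sup>2 = 1 / sinh t"
  by (simp add: rho_def power_divide)

lemma sqrt_sinh_deriv:
  assumes "0 < t"
  shows "((\<lambda>t. sqrt (sinh t)) has_real_derivative cosh t / (2 * sqrt (sinh t))) (at t)"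
proof -
  have "((\<lambda>t. sqrt (sinh t)) has_real_derivative inverse (sqrt (sinh t)) / 2 * cosh t) (at t)"
    by (rule DERIV_chain2[OF DERIV_real_sqrt]) (use assms in \<open>auto intro!: derivative_eq_intros\<close>)
  then show ?thesis by (simp add: field_simps)
qed

lemma rho_deriv:
  assumes "0 < t"
  shows "(rho has_real_derivative rho' t) (at t)"
proof -
  define r where "r = sqrt (sinh t)"
  have r: "0 < r" "r * r = sinh t" using assms by (simp_all add: r_def)
  have "((\<lambda>t. 1 / sqrt (sinh t)) has_real_derivative
      (0 * r - cosh t / (2 * r) * 1) / (r * r)) (at t)"
    using DERIV_quotient[OF DERIV_const sqrt_sinh_deriv[OF assms], of 1] r
    by (simp add: r_def)
  moreover have "(0 * r - cosh t / (2 * r) * 1) / (r * r) = rho' t"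
    using r by (simp add: rho'_def rho_def r_def[symmetric] field_simps)
  ultimately show ?thesis by (simp add: rho_def[abs_def])
qed

lemma rho'_deriv:
  assumes "0 < t"
  shows "(rho' has_real_derivative P t * rho t) (at t)"
proof -
  have "((\<lambda>t. - (cosh t / sinh t * rho t) / 2) has_real_derivative
      - (- 1 / (sinh t)\<^sup>2 * rho t + rho' t * (cosh t / sinh t)) / 2) (at t)"
    using assms by (intro DERIV_cdivide DERIV_minus DERIV_mult coth_has_real_derivative rho_deriv) auto
  moreover have "(\<lambda>t. - (cosh t / sinh t * rho t) / 2) = rho'"
    by (simp add: fun_eq_iff rho'_def)
  moreover have "- (- 1 / (sinh t)\<^sup>2 * rho t + rho' t * (cosh t / sinh t)) / 2 = P t * rho t"
  proof -
    have "rho' t * (cosh t / sinh t) = - (cosh t)\<^sup>2 / (sinh t)\<^sup>2 * rho t / 2"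
      by (simp add: rho'_def power2_eq_square field_simps)
    also have "\<dots> = - ((sinh t)\<^sup>2 + 1) / (sinh t)\<^sup>2 * rho t / 2"
      by (simp only: cosh_square_eq)
    finally have e: "rho' t * (cosh t / sinh t) = - ((sinh t)\<^sup>2 + 1) / (sinh t)\<^sup>2 * rho t / 2" .
    show ?thesis
      unfolding e using assms by (simp add: P_eq_sinh field_simps power2_eq_square)
  qed
  ultimately show ?thesis by simp
qed

lemma cnj_mult_self: "cnj z * z = complex_of_real ((cmod z)\<^sup>2)"
  by (metis complex_norm_square mult.commute)

locale L2_solution =
  fixes w w' w'' :: "real \<Rightarrow> complex" and lam :: complex
  assumes w_deriv: "\<And>x. 0 < x \<Longrightarrow> (w has_vector_derivative w' x) (at x)"
    and w'_deriv: "\<And>x. 0 < x \<Longrightarrow> (w' has_vector_derivative w'' x) (at x)"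
    and equation: "\<And>x. 0 < x \<Longrightarrow> - w'' x + complex_of_real (P x) * w x = lam * w x"
    and square_integrable: "set_integrable lborel {0<..} (\<lambda>x. (cmod (w x))\<^sup>2)"
begin

definition f :: "real \<Rightarrow> real" where "f x = (cmod (w x))\<^sup>2"
definition h :: "real \<Rightarrow> complex" where "h x = cnj (w x) * w' x"
definition M :: real where "M = integral {0<..} f"

lemma w''_eq: "0 < x \<Longrightarrow> w'' x = (of_real (P x) - lam) * w x"
  using equation[of x] by (simp add: algebra_simps)

lemma continuous_on_w: "continuous_on {0<..} w"
  by (rule continuous_at_imp_continuous_on) (use w_deriv has_vector_derivative_continuous in blast)

lemma continuous_on_w': "continuous_on {0<..} w'"
  by (rule continuous_at_imp_continuous_on) (use w'_deriv has_vector_derivative_continuous in blast)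

lemma continuous_on_f: "continuous_on {0<..} f"
  unfolding f_def by (intro continuous_intros continuous_on_w)

lemma continuous_on_norm_w'_sq: "continuous_on {0<..} (\<lambda>x. (cmod (w' x))\<^sup>2)"
  by (intro continuous_intros continuous_on_w')

lemma f_nonneg: "0 \<le> f x"
  by (simp add: f_def)

lemma f_pos: "w x \<noteq> 0 \<Longrightarrow> 0 < f x"
  by (simp add: f_def)

lemma integral_f_le_M: "0 < a \<Longrightarrow> integral {a..b} f \<le> M"
  unfolding M_def
  by (rule integral_le_integral_pos[OF continuous_on_f f_nonneg])
    (use square_integrable in \<open>simp_all add: f_def[abs_def]\<close>)

lemma integral_f_nonneg: "0 < a \<Longrightarrow> 0 \<le> integral {a..b} f"
  by (rule integral_nonneg, rule integrable_continuous_interval,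
      rule continuous_on_subset[OF continuous_on_f]) (auto simp: f_nonneg)

lemma M_nonneg: "0 \<le> M"
  using integral_f_nonneg[of 1 1] integral_f_le_M[of 1 1] by linarith

lemma norm_h: "cmod (h x) = cmod (w x) * cmod (w' x)"
  by (simp add: h_def norm_mult)

lemma norm_h_le: "cmod (h x) \<le> (f x + (cmod (w' x))\<^sup>2) / 2"
  using sum_squares_bound[of "cmod (w x)" "cmod (w' x)"] by (simp add: norm_h f_def)

lemma h_deriv:
  assumes "0 < x"
  shows "(h has_vector_derivative
    of_real ((cmod (w' x))\<^sup>2 + (P x - Re lam) * f x) - \<i> * of_real (Im lam * f x)) (at x)"
proof -
  have "(h has_vector_derivative cnj (w x) * w'' x + cnj (w' x) * w' x) (at x)"
    unfolding h_def[abs_def] by (rule derivative_eq_intros w_deriv w'_deriv assms refl)+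
  moreover have "cnj (w x) * w'' x + cnj (w' x) * w' x =
    of_real ((cmod (w' x))\<^sup>2 + (P x - Re lam) * f x) - \<i> * of_real (Im lam * f x)"
  proof -
    have "cnj (w x) * w'' x = (of_real (P x) - lam) * (cnj (w x) * w x)"
      by (simp add: w''_eq[OF assms] algebra_simps)
    then show ?thesis
      unfolding cnj_mult_self f_def by (simp add: complex_eq_iff algebra_simps del: of_real_power)
  qed
  ultimately show ?thesis by simp
qed

lemma Re_h_deriv:
  "0 < x \<Longrightarrow> ((\<lambda>x. Re (h x)) has_real_derivative (cmod (w' x))\<^sup>2 + (P x - Re lam) * f x) (at x)"
  using has_field_derivative_Re[OF h_deriv] by simp

lemma Im_h_deriv: "0 < x \<Longrightarrow> ((\<lambda>x. Im (h x)) has_real_derivative - (Im lam * f x)) (at x)"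
  using has_field_derivative_Im[OF h_deriv] by simp

lemma f_deriv:
  assumes "0 < x"
  shows "(f has_real_derivative 2 * Re (h x)) (at x)"
proof -
  have "((\<lambda>x. cnj (w x) * w x) has_vector_derivative cnj (w x) * w' x + cnj (w' x) * w x) (at x)"
    by (rule derivative_eq_intros w_deriv assms refl)+
  from has_field_derivative_Re[OF this]
  have "((\<lambda>x. Re (cnj (w x) * w x)) has_real_derivative 2 * Re (h x)) (at x)"
    by (simp add: h_def)
  moreover have "(\<lambda>x. Re (cnj (w x) * w x)) = f"
    by (simp add: fun_eq_iff cnj_mult_self f_def)
  ultimately show ?thesis by simp
qed

subsection \<open>Behaviour at infinity\<close>

lemma Re_h_frequently_lt_1:
  assumes "0 < b"
  shows "\<exists>t\<ge>b. Re (h t) < 1"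
proof (rule ccontr)
  assume "\<not> ?thesis"
  then have Re_h_ge: "1 \<le> Re (h t)" if "b \<le> t" for t
    using that by force
  have f_ge: "2 * (t - b) \<le> f t" if "b \<le> t" for t
  proof -
    have "(\<lambda>t. f t - 2 * t) b \<le> (\<lambda>t. f t - 2 * t) t"
    proof (rule DERIV_nonneg_imp_le[OF that])
      fix x assume "x \<in> {b..t}"
      then have "0 < x" using assms by simp
      show "((\<lambda>t. f t - 2 * t) has_real_derivative 2 * Re (h x) - 2) (at x within {b..t})"
        by (auto intro!: derivative_eq_intros has_field_derivative_at_within[OF f_deriv[OF \<open>0 < x\<close>]])
    next
      fix x assume "b < x"
      then show "0 \<le> 2 * Re (h x) - 2" using Re_h_ge[of x] by simp
    qed
    then show ?thesis using f_nonneg[of b] by simp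
  qed
  define t where "t = b + M + 1"
  have "b \<le> t" using M_nonneg by (simp add: t_def)
  have "(\<lambda>t. integral {b..t} f - (t - b)\<^sup>2) b \<le> (\<lambda>t. integral {b..t} f - (t - b)\<^sup>2) t"
  proof (rule DERIV_nonneg_imp_le[OF \<open>b \<le> t\<close>])
    fix x assume x: "x \<in> {b..t}"
    show "((\<lambda>t. integral {b..t} f - (t - b)\<^sup>2) has_real_derivative f x - 2 * (x - b))
        (at x within {b..t})"
    proof (rule DERIV_diff)
      show "((\<lambda>t. integral {b..t} f) has_real_derivative f x) (at x within {b..t})"
        by (rule integral_has_real_derivative_pos[OF continuous_on_f assms x])
      show "((\<lambda>t. (t - b)\<^sup>2) has_real_derivative 2 * (x - b)) (at x within {b..t})"
        by (auto intro!: derivative_eq_intros)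
    qed
  next
    fix x assume "b < x"
    then show "0 \<le> f x - 2 * (x - b)" using f_ge[of x] by simp
  qed
  then have "(M + 1)\<^sup>2 \<le> integral {b..t} f" by (simp add: t_def)
  moreover have "integral {b..t} f \<le> M" by (rule integral_f_le_M[OF assms])
  moreover have "M < (M + 1)\<^sup>2"
  proof -
    have "(M + 1)\<^sup>2 = M * M + 2 * M + 1" by (simp add: power2_eq_square algebra_simps)
    moreover have "0 \<le> M * M" using M_nonneg by simp
    ultimately show ?thesis using M_nonneg by linarith
  qed
  ultimately show False by linarith
qed

lemma Re_h_lower_bound:
  assumes "0 < a" "a \<le> t"
  shows "Re (h a) + integral {a..t} (\<lambda>x. (cmod (w' x))\<^sup>2) - (P a + \<bar>Re lam\<bar>) * integral {a..t} f
    \<le> Re (h t)"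
proof -
  define K where "K = P a + \<bar>Re lam\<bar>"
  define F where "F t = integral {a..t} f" for t
  define G where "G t = integral {a..t} (\<lambda>x. (cmod (w' x))\<^sup>2)" for t
  have "(\<lambda>t. Re (h t) - G t + K * F t) a \<le> (\<lambda>t. Re (h t) - G t + K * F t) t"
  proof (rule DERIV_nonneg_imp_le[OF assms(2)])
    fix x assume x: "x \<in> {a..t}"
    then have "0 < x" using assms by simp
    have "(F has_real_derivative f x) (at x within {a..t})"
      unfolding F_def by (rule integral_has_real_derivative_pos[OF continuous_on_f assms(1) x])
    moreover have "(G has_real_derivative (cmod (w' x))\<^sup>2) (at x within {a..t})"
      unfolding G_def by (rule integral_has_real_derivative_pos[OF continuous_on_norm_w'_sq assms(1) x])
    ultimately show "((\<lambda>t. Re (h t) - G t + K * F t) has_real_derivative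
        ((cmod (w' x))\<^sup>2 + (P x - Re lam) * f x) - (cmod (w' x))\<^sup>2 + K * f x) (at x within {a..t})"
      by (intro DERIV_add DERIV_diff DERIV_cmult has_field_derivative_at_within[OF Re_h_deriv[OF \<open>0 < x\<close>]])
  next
    fix x assume "a < x"
    then have "- K \<le> P x - Re lam"
      using P_antimono[of a x] P_gt_quarter[of x] assms unfolding K_def by auto
    then have "- K * f x \<le> (P x - Re lam) * f x"
      by (rule mult_right_mono[OF _ f_nonneg])
    then show "0 \<le> ((cmod (w' x))\<^sup>2 + (P x - Re lam) * f x) - (cmod (w' x))\<^sup>2 + K * f x"
      by simp
  qed
  then show ?thesis by (simp add: F_def G_def K_def)
qed

lemma integral_norm_w'_sq_bounded:
  assumes "0 < a"
  shows "\<exists>C. \<forall>b\<ge>a. integral {a..b} (\<lambda>x. (cmod (w' x))\<^sup>2) \<le> C"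
proof -
  define K where "K = P a + \<bar>Re lam\<bar>"
  define G where "G t = integral {a..t} (\<lambda>x. (cmod (w' x))\<^sup>2)" for t
  have G_mono: "G b \<le> G t" if "b \<le> t" for b t
    unfolding G_def
  proof (rule integral_subset_le)
    show "(\<lambda>x. (cmod (w' x))\<^sup>2) integrable_on {a..b}" "(\<lambda>x. (cmod (w' x))\<^sup>2) integrable_on {a..t}"
      by (intro integrable_continuous_interval continuous_on_subset[OF continuous_on_norm_w'_sq];
          use assms in auto)+
  qed (use that in auto)
  have "G b \<le> K * M - Re (h a) + 1" if ab: "a \<le> b" for b
  proof (rule ccontr)
    assume G_large: "\<not> G b \<le> K * M - Re (h a) + 1"
    obtain t where t: "b \<le> t" "Re (h t) < 1"
      using Re_h_frequently_lt_1[of b] assms ab by auto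
    have "K * integral {a..t} f \<le> K * M"
      using integral_f_le_M[OF assms] P_gt_quarter[OF assms] unfolding K_def
      by (intro mult_left_mono) auto
    then show False
      using Re_h_lower_bound[OF assms, of t] G_mono[OF t(1)] t ab G_large
      unfolding G_def K_def by linarith
  qed
  then show ?thesis unfolding G_def by blast
qed

lemma norm_h_not_bounded_below_at_top:
  assumes "0 < a" "0 < \<delta>" "\<And>x. a \<le> x \<Longrightarrow> \<delta> \<le> cmod (h x)"
  shows False
proof -
  obtain C where C: "\<And>b. a \<le> b \<Longrightarrow> integral {a..b} (\<lambda>x. (cmod (w' x))\<^sup>2) \<le> C"
    using integral_norm_w'_sq_bounded[OF assms(1)] by blast
  define I where "I t = (integral {a..t} f + integral {a..t} (\<lambda>x. (cmod (w' x))\<^sup>2)) / 2" for t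
  obtain t where t: "a \<le> t" "(M + C) / 2 < \<delta> * (t - a)"
    using exists_gt_linear[OF assms(2)] by blast
  have "\<delta> * (t - a) \<le> (M + C) / 2"
  proof -
    have "(\<lambda>t. I t - \<delta> * (t - a)) a \<le> (\<lambda>t. I t - \<delta> * (t - a)) t"
    proof (rule DERIV_nonneg_imp_le[OF t(1)])
      fix x assume x: "x \<in> {a..t}"
      have "(I has_real_derivative (f x + (cmod (w' x))\<^sup>2) / 2) (at x within {a..t})"
        unfolding I_def
        by (intro DERIV_cdivide DERIV_add integral_has_real_derivative_pos[OF _ assms(1) x]
            continuous_on_f continuous_on_norm_w'_sq)
      then show "((\<lambda>t. I t - \<delta> * (t - a)) has_real_derivative
          (f x + (cmod (w' x))\<^sup>2) / 2 - \<delta>) (at x within {a..t})"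
        by (rule DERIV_diff) (auto intro!: derivative_eq_intros)
    next
      fix x assume "a < x"
      then show "0 \<le> (f x + (cmod (w' x))\<^sup>2) / 2 - \<delta>"
        using norm_h_le[of x] assms(3)[of x] by simp
    qed
    then show ?thesis
      using integral_f_le_M[OF assms(1), of t] C[OF t(1)] by (simp add: I_def)
  qed
  with t(2) show False by simp
qed

subsection \<open>Behaviour at zero\<close>

definition g :: "real \<Rightarrow> complex" where
  "g t = w' t * of_real (rho t) - w t * of_real (rho' t)"

definition v :: "real \<Rightarrow> complex" where
  "v t = w t * of_real (sqrt (sinh t))"

lemma g_deriv:
  assumes "0 < t"
  shows "(g has_vector_derivative - lam * w t * of_real (rho t)) (at t)"
proof -
  have "(g has_vector_derivative (w' t * of_real (rho' t) + w'' t * of_real (rho t))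
      - (w t * of_real (P t * rho t) + w' t * of_real (rho' t))) (at t)"
    unfolding g_def[abs_def]
    by (intro has_vector_derivative_diff has_vector_derivative_mult has_vector_derivative_of_real
        w_deriv w'_deriv rho_deriv rho'_deriv assms)
  moreover have "(w' t * of_real (rho' t) + w'' t * of_real (rho t))
      - (w t * of_real (P t * rho t) + w' t * of_real (rho' t)) = - lam * w t * of_real (rho t)"
    by (simp add: w''_eq[OF assms] algebra_simps)
  ultimately show ?thesis by simp
qed

lemma v_deriv:
  assumes "0 < t"
  shows "(v has_vector_derivative of_real (sinh t) * g t) (at t)"
proof -
  have "(v has_vector_derivative
      w t * of_real (cosh t / (2 * sqrt (sinh t))) + w' t * of_real (sqrt (sinh t))) (at t)"
    unfolding v_def[abs_def]
    by (intro has_vector_derivative_mult has_vector_derivative_of_real w_deriv sqrt_sinh_deriv assms)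
  moreover have "sinh t * rho t = sqrt (sinh t)"
    using assms by (simp add: rho_def real_div_sqrt)
  moreover have "sinh t * rho' t = - cosh t / (2 * sqrt (sinh t))"
    using assms by (simp add: rho'_def rho_def field_simps)
  ultimately show ?thesis
    by (simp add: g_def algebra_simps flip: of_real_mult)
qed

lemma continuous_on_g: "0 < a \<Longrightarrow> continuous_on {a..b} g"
  by (rule continuous_on_vector_derivative, rule has_vector_derivative_at_within, rule g_deriv) auto

lemma continuous_on_v: "0 < a \<Longrightarrow> continuous_on {a..b} v"
  by (rule continuous_on_vector_derivative, rule has_vector_derivative_at_within, rule v_deriv) auto

lemma norm_v: "0 < t \<Longrightarrow> cmod (v t) = cmod (w t) * sqrt (sinh t)"
  by (simp add: v_def norm_mult)

lemma norm_g_deriv_le: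
  assumes "0 < t"
  shows "cmod (- lam * w t * of_real (rho t)) \<le> cmod lam / 2 * (f t + 1 / t)"
proof -
  have "cmod (w t) * rho t \<le> ((cmod (w t))\<^sup>2 + (rho t)\<^sup>2) / 2"
    using sum_squares_bound[of "cmod (w t)" "rho t"] by simp
  also have "(rho t)\<^sup>2 \<le> 1 / t"
    unfolding rho_square[OF assms] using sinh_ge_self[of t] assms
    by (intro divide_left_mono) auto
  finally have "cmod (w t) * rho t \<le> (f t + 1 / t) / 2"
    by (simp add: f_def)
  then show ?thesis
    using rho_pos[OF assms] by (simp add: norm_mult mult_left_mono mult.assoc)
qed

lemma norm_g_le:
  assumes "0 < a" "a \<le> x"
  shows "cmod (g a) \<le> cmod (g x) + cmod lam / 2 * M + cmod lam / 2 * (ln x - ln a)"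
proof (cases "a = x")
  case True
  then show ?thesis using M_nonneg assms by simp
next
  case False
  then have "a < x" using assms by simp
  define B where "B = cmod lam / 2"
  define \<phi> where "\<phi> t = B * (integral {a..t} f + ln t)" for t
  have "cmod (g x - g a) \<le> \<phi> x - \<phi> a"
  proof (rule differentiable_bound_general[OF \<open>a < x\<close> continuous_on_g[OF assms(1)]])
    have "continuous_on {a..x} ln"
      by (rule continuous_on_ln[OF continuous_on_id]) (use assms in auto)
    moreover have "continuous_on {a..x} (\<lambda>t. integral {a..t} f)"
      by (rule DERIV_continuous_on[OF integral_has_real_derivative_pos[OF continuous_on_f assms(1)]])
    ultimately show "continuous_on {a..x} \<phi>"
      unfolding \<phi>_def by (intro continuous_on_mult continuous_on_const continuous_on_add)
    fix t assume t: "a < t" "t < x"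
    then show "(g has_vector_derivative - lam * w t * of_real (rho t)) (at t)"
      using assms by (intro g_deriv) auto
    have "((\<lambda>t. integral {a..t} f) has_real_derivative f t) (at t)"
      using integral_has_real_derivative_pos[OF continuous_on_f assms(1), of t x] t
        at_within_interior[of t "{a..x}"] by (simp add: interior_atLeastAtMost_real)
    then have "(\<phi> has_real_derivative B * (f t + 1 / t)) (at t)"
      unfolding \<phi>_def using t assms by (intro DERIV_cmult DERIV_add DERIV_ln_divide) auto
    then show "(\<phi> has_vector_derivative B * (f t + 1 / t)) (at t)"
      by (simp add: has_real_derivative_iff_has_vector_derivative)
    show "cmod (- lam * w t * of_real (rho t)) \<le> B * (f t + 1 / t)"
      unfolding B_def using norm_g_deriv_le[of t] t assms by simp
  qed
  moreover have "B * integral {a..x} f \<le> B * M"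
    using integral_f_le_M[OF assms(1)] by (intro mult_left_mono) (auto simp: B_def)
  moreover have "cmod (g a) \<le> cmod (g x) + cmod (g x - g a)"
    by (metis norm_minus_commute norm_triangle_sub add.commute)
  moreover have "\<phi> x - \<phi> a = B * integral {a..x} f + B * (ln x - ln a)"
    by (simp add: \<phi>_def algebra_simps)
  ultimately show ?thesis unfolding B_def by linarith
qed

lemma f_not_bounded_below_by_inverse:
  assumes "0 < k" "0 < b" "\<And>a. 0 < a \<Longrightarrow> a < b \<Longrightarrow> k / a \<le> f a"
  shows False
proof -
  define a where "a = b * exp (- (M / k) - 1)"
  have "0 \<le> M / k" using M_nonneg assms(1) by simp
  then have a: "0 < a" "a < b"
    unfolding a_def using assms(2) by (auto simp: mult_less_cancel_left1)
  have "(\<lambda>t. integral {a..t} f - k * ln t) a \<le> (\<lambda>t. integral {a..t} f - k * ln t) b"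
  proof (rule DERIV_nonneg_imp_le[OF less_imp_le[OF a(2)]])
    fix x assume x: "x \<in> {a..b}"
    then have "0 < x" using a by simp
    show "((\<lambda>t. integral {a..t} f - k * ln t) has_real_derivative f x - k * (1 / x)) (at x within {a..b})"
      by (intro DERIV_diff DERIV_cmult integral_has_real_derivative_pos[OF continuous_on_f a(1) x]
          has_field_derivative_at_within[OF DERIV_ln_divide[OF \<open>0 < x\<close>]])
  next
    fix x assume "a < x" "x < b"
    then show "0 \<le> f x - k * (1 / x)" using assms(3)[of x] a by simp
  qed
  then have "k * (ln b - ln a) \<le> integral {a..b} f" by (simp add: algebra_simps)
  also have "\<dots> \<le> M" by (rule integral_f_le_M[OF a(1)])
  finally have "k * (ln b - ln a) \<le> M" .
  moreover have "ln a = ln b - M / k - 1" unfolding a_def using assms(2) by (simp add: ln_mult)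
  then have "k * (ln b - ln a) = M + k" using assms(1) by (simp add: field_simps)
  ultimately show False using assms(1) by linarith
qed

lemma norm_v_diff_le:
  assumes "0 < a" "a \<le> b" and small: "\<And>t. a < t \<Longrightarrow> t < b \<Longrightarrow> sinh t * cmod (g t) \<le> \<epsilon>"
  shows "cmod (v b - v a) \<le> \<epsilon> * b - \<epsilon> * a"
proof (cases "a = b")
  case False
  then have "a < b" using assms by simp
  show ?thesis
  proof (rule differentiable_bound_general[OF \<open>a < b\<close> continuous_on_v[OF assms(1)]])
    show "continuous_on {a..b} ((*) \<epsilon>)" by (intro continuous_intros)
    fix x assume x: "a < x" "x < b"
    then show "(v has_vector_derivative of_real (sinh x) * g x) (at x)"
      using assms by (intro v_deriv) simp
    show "((*) \<epsilon> has_vector_derivative \<epsilon>) (at x)"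
      using DERIV_cmult[OF DERIV_ident, of \<epsilon>] by (simp add: has_real_derivative_iff_has_vector_derivative)
    have "0 < sinh x" using x assms by simp
    then show "cmod (of_real (sinh x) * g x) \<le> \<epsilon>"
      using small[OF x] by (simp add: norm_mult)
  qed
qed simp

lemma norm_v_le:
  assumes "0 < \<epsilon>" "0 < b" and small: "\<And>t. 0 < t \<Longrightarrow> t \<le> b \<Longrightarrow> sinh t * cmod (g t) \<le> \<epsilon>"
  shows "cmod (v b) \<le> \<epsilon> * b"
proof (rule ccontr)
  assume "\<not> cmod (v b) \<le> \<epsilon> * b"
  define c where "c = cmod (v b) - \<epsilon> * b"
  have c: "0 < c" using \<open>\<not> _\<close> by (simp add: c_def)
  have v_ge: "c \<le> cmod (v a)" if a: "0 < a" "a \<le> b" for a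
  proof -
    have "cmod (v b - v a) \<le> \<epsilon> * b - \<epsilon> * a"
      using a by (intro norm_v_diff_le small) auto
    moreover have "cmod (v b) \<le> cmod (v a) + cmod (v b - v a)"
      by (metis norm_triangle_sub add.commute)
    moreover have "0 \<le> \<epsilon> * a" using assms a by simp
    ultimately show ?thesis unfolding c_def by linarith
  qed
  define k where "k = c\<^sup>2 / cosh b"
  have "0 < k" using c by (simp add: k_def)
  moreover have "k / a \<le> f a" if a: "0 < a" "a < b" for a
  proof -
    have "c\<^sup>2 \<le> (cmod (v a))\<^sup>2" using v_ge[of a] a c by (intro power_mono) auto
    also have "(cmod (v a))\<^sup>2 = f a * sinh a"
      using a by (simp add: norm_v f_def power_mult_distrib)
    also have "sinh a \<le> a * cosh b"
    proof -
      have "cosh a \<le> cosh b" using a by (simp add: cosh_real_nonneg_le_iff)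
      then have "a * cosh a \<le> a * cosh b" using a by (simp add: mult_left_mono)
      then show ?thesis using sinh_le_mult_cosh[of a] a by linarith
    qed
    then have "f a * sinh a \<le> f a * (a * cosh b)" by (rule mult_left_mono[OF _ f_nonneg])
    finally show ?thesis using a cosh_real_ge_1[of b] by (simp add: k_def field_simps)
  qed
  ultimately show False by (rule f_not_bounded_below_by_inverse[OF _ assms(2)])
qed

lemma norm_h_le_norm_v_g:
  assumes "0 < t"
  shows "cmod (h t) \<le> cmod (v t) * cmod (g t) + (cmod (v t))\<^sup>2 * cosh t / (2 * (sinh t)\<^sup>2)"
proof -
  define r where "r = sqrt (sinh t)"
  have s: "0 < sinh t" using assms by simp
  have r: "0 < r" "r * r = sinh t" "rho t = 1 / r" using s by (simp_all add: r_def rho_def)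
  have "w' t = of_real r * (g t + w t * of_real (rho' t))"
    using r by (simp add: g_def algebra_simps flip: of_real_mult)
  then have w': "cmod (w' t) \<le> r * (cmod (g t) + cmod (w t) * \<bar>rho' t\<bar>)"
    using r norm_triangle_ineq[of "g t" "w t * of_real (rho' t)"]
    by (simp add: norm_mult mult_left_mono)
  have w: "cmod (w t) = cmod (v t) / r"
    using norm_v[OF assms] r by (simp add: r_def)
  have rho': "\<bar>rho' t\<bar> = cosh t / (2 * sinh t * r)"
    using r s by (simp add: rho'_def abs_mult)
  have "cmod (h t) \<le> cmod (v t) / r * (r * (cmod (g t) + cmod (v t) / r * (cosh t / (2 * sinh t * r))))"
    using w' r unfolding norm_h w rho' by (intro mult_left_mono) auto
  also have "\<dots> = cmod (v t) * cmod (g t) + (cmod (v t))\<^sup>2 * cosh t / (2 * (sinh t)\<^sup>2)"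
    using r s by (simp add: field_simps power2_eq_square)
  finally show ?thesis .
qed

lemma norm_h_le_of_small_g:
  assumes "0 < \<epsilon>" "\<epsilon> \<le> 1" "0 < t" "t \<le> x"
    and small: "\<And>s. 0 < s \<Longrightarrow> s \<le> t \<Longrightarrow> sinh s * cmod (g s) \<le> \<epsilon>"
    and "t * cmod (g t) \<le> 1"
  shows "cmod (h t) \<le> \<epsilon> * (2 + cosh x) / 2"
proof -
  have v_le: "cmod (v t) \<le> \<epsilon> * t"
    by (rule norm_v_le[OF assms(1,3) small])
  have "cmod (v t) * cmod (g t) \<le> \<epsilon> * t * cmod (g t)"
    using v_le by (rule mult_right_mono) simp
  also have "\<dots> \<le> \<epsilon>"
    using assms(1,6) mult_left_mono[OF assms(6), of \<epsilon>] by (simp add: mult.assoc)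
  finally have vg: "cmod (v t) * cmod (g t) \<le> \<epsilon>" .
  have s: "0 < sinh t" using assms(3) by simp
  have "cmod (v t) \<le> \<epsilon> * sinh t"
    using v_le sinh_ge_self[of t] assms(1,3) by (smt (verit) mult_left_mono)
  then have "(cmod (v t))\<^sup>2 \<le> (\<epsilon> * sinh t)\<^sup>2"
    by (intro power_mono) auto
  also have "\<dots> = (\<epsilon> * \<epsilon>) * (sinh t)\<^sup>2"
    by (simp add: power2_eq_square algebra_simps)
  also have "\<dots> \<le> \<epsilon> * (sinh t)\<^sup>2"
    using assms(1,2) by (intro mult_right_mono mult_left_le) auto
  finally have "(cmod (v t))\<^sup>2 / (sinh t)\<^sup>2 \<le> \<epsilon>"
    using s by (simp add: field_simps)
  moreover have "cosh t \<le> cosh x"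
    using assms(3,4) by (simp add: cosh_real_nonneg_le_iff)
  ultimately have "(cmod (v t))\<^sup>2 / (sinh t)\<^sup>2 * cosh t / 2 \<le> \<epsilon> * cosh x / 2"
    using assms(1) cosh_real_ge_1[of t] by (intro divide_right_mono mult_mono) auto
  with vg norm_h_le_norm_v_g[OF assms(3)] show ?thesis
    by (simp add: field_simps)
qed

lemma norm_h_not_bounded_below_at_0:
  assumes "0 < x" "0 < L" "\<And>a. 0 < a \<Longrightarrow> a \<le> x \<Longrightarrow> L \<le> cmod (h a)"
  shows False
proof -
  define A where "A = cmod (g x) + cmod lam / 2 * M"
  define B where "B = cmod lam / 2"
  define \<Lambda> where "\<Lambda> t = A + B * (ln x - ln t)" for t
  have g_le: "cmod (g s) \<le> \<Lambda> s" if "0 < s" "s \<le> x" for s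
    using norm_g_le[OF that] by (simp add: \<Lambda>_def A_def B_def)
  define \<epsilon> where "\<epsilon> = min 1 (L / (2 + cosh x))"
  have "0 < 2 + cosh x" using cosh_real_ge_1[of x] by simp
  then have \<epsilon>: "0 < \<epsilon>" "\<epsilon> \<le> 1"
    using assms(2) by (auto simp: \<epsilon>_def)
  have "\<epsilon> * (2 + cosh x) \<le> L / (2 + cosh x) * (2 + cosh x)"
    using \<open>0 < 2 + cosh x\<close> by (intro mult_right_mono) (auto simp: \<epsilon>_def)
  then have "\<epsilon> * (2 + cosh x) \<le> L"
    using \<open>0 < 2 + cosh x\<close> by simp
  have "((\<lambda>t. sinh t * \<Lambda> t) \<longlongrightarrow> 0) (at_right 0)"
    unfolding \<Lambda>_def by real_asymp
  moreover have "((\<lambda>t. t * \<Lambda> t) \<longlongrightarrow> 0) (at_right 0)"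
    unfolding \<Lambda>_def by real_asymp
  ultimately have "eventually (\<lambda>t. sinh t * \<Lambda> t < \<epsilon> \<and> t * \<Lambda> t < 1) (at_right 0)"
    using \<epsilon>(1) by (intro eventually_conj order_tendstoD(2)) auto
  then obtain b where b: "0 < b" "\<And>s. 0 < s \<Longrightarrow> s < b \<Longrightarrow> sinh s * \<Lambda> s < \<epsilon> \<and> s * \<Lambda> s < 1"
    unfolding eventually_at_right_field by auto
  define t where "t = min x (b / 2)"
  have t: "0 < t" "t \<le> x" "t < b" using assms(1) b(1) by (auto simp: t_def)
  have "cmod (h t) \<le> \<epsilon> * (2 + cosh x) / 2"
  proof (rule norm_h_le_of_small_g[OF \<epsilon>(1,2) t(1,2)])
    fix s assume s: "0 < s" "s \<le> t"
    then have "sinh s * cmod (g s) \<le> sinh s * \<Lambda> s"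
      using g_le[of s] t by (intro mult_left_mono) auto
    then show "sinh s * cmod (g s) \<le> \<epsilon>"
      using b(2)[of s] s t by linarith
  next
    have "t * cmod (g t) \<le> t * \<Lambda> t"
      using g_le[of t] t by (intro mult_left_mono) auto
    then show "t * cmod (g t) \<le> 1"
      using b(2)[of t] t by linarith
  qed
  then show False using assms(2) assms(3)[of t] t \<open>\<epsilon> * (2 + cosh x) \<le> L\<close> by simp
qed

subsection \<open>Excluding every eigenvalue\<close>

lemma no_decreasing_minorant:
  fixes \<phi> \<phi>' :: "real \<Rightarrow> real"
  assumes "0 < x0"
    and deriv: "\<And>x. 0 < x \<Longrightarrow> (\<phi> has_real_derivative \<phi>' x) (at x)"
    and nonpos: "\<And>x. 0 < x \<Longrightarrow> \<phi>' x \<le> 0" and "\<phi>' x0 < 0"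
    and minorant: "\<And>x. 0 < x \<Longrightarrow> \<bar>\<phi> x\<bar> \<le> cmod (h x)"
  shows False
proof -
  have mono: "\<phi> b \<le> \<phi> a" if ab: "0 < a" "a \<le> b" for a b
  proof -
    have "(\<lambda>x. - \<phi> x) a \<le> (\<lambda>x. - \<phi> x) b"
    proof (rule DERIV_nonneg_imp_le[OF ab(2)])
      fix x assume "x \<in> {a..b}"
      then show "((\<lambda>x. - \<phi> x) has_real_derivative - \<phi>' x) (at x within {a..b})"
        using ab by (intro DERIV_minus has_field_derivative_at_within[OF deriv]) auto
    next
      fix x assume "a < x"
      then show "0 \<le> - \<phi>' x" using nonpos[of x] ab by simp
    qed
    then show ?thesis by simp
  qed
  have nonneg: "0 \<le> \<phi> x" if "0 < x" for x
  proof (rule ccontr)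
    assume "\<not> 0 \<le> \<phi> x"
    show False
    proof (rule norm_h_not_bounded_below_at_top[OF that])
      show "0 < - \<phi> x" using \<open>\<not> 0 \<le> \<phi> x\<close> by simp
      fix y assume "x \<le> y"
      then show "- \<phi> x \<le> cmod (h y)" using mono[OF that \<open>x \<le> y\<close>] minorant[of y] that by simp
    qed
  qed
  have "0 < \<phi> x0"
  proof -
    obtain d where "0 < d" "\<And>e. 0 < e \<Longrightarrow> e < d \<Longrightarrow> \<phi> (x0 + e) < \<phi> x0"
      using DERIV_neg_dec_right[OF deriv[OF assms(1)] assms(4)] by blast
    then have "\<phi> (x0 + d / 2) < \<phi> x0" by simp
    moreover have "0 \<le> \<phi> (x0 + d / 2)" using nonneg assms(1) \<open>0 < d\<close> by simp
    ultimately show ?thesis by linarith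
  qed
  then show False
  proof (rule norm_h_not_bounded_below_at_0[OF assms(1)])
    fix a assume "0 < a" "a \<le> x0"
    then show "\<phi> x0 \<le> cmod (h a)" using mono[of a x0] minorant[of a] by simp
  qed
qed

lemma Im_lam_eq_0:
  assumes "0 < x0" "w x0 \<noteq> 0"
  shows "Im lam = 0"
proof (rule ccontr)
  assume "Im lam \<noteq> 0"
  have sgn_Im: "sgn (Im lam) * Im lam = \<bar>Im lam\<bar>" by (simp add: sgn_if)
  show False
  proof (rule no_decreasing_minorant[OF assms(1),
        where \<phi> = "\<lambda>x. sgn (Im lam) * Im (h x)" and \<phi>' = "\<lambda>x. - (\<bar>Im lam\<bar> * f x)"])
    fix x :: real assume "0 < x"
    show "((\<lambda>x. sgn (Im lam) * Im (h x)) has_real_derivative - (\<bar>Im lam\<bar> * f x)) (at x)"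
      using DERIV_cmult[OF Im_h_deriv[OF \<open>0 < x\<close>], of "sgn (Im lam)"] sgn_Im
      by (simp add: mult.assoc[symmetric])
    show "- (\<bar>Im lam\<bar> * f x) \<le> 0" by (simp add: f_nonneg)
    show "\<bar>sgn (Im lam) * Im (h x)\<bar> \<le> cmod (h x)"
      unfolding abs_mult using \<open>Im lam \<noteq> 0\<close> abs_Im_le_cmod[of "h x"] by (simp add: sgn_if)
  next
    show "- (\<bar>Im lam\<bar> * f x0) < 0" using \<open>Im lam \<noteq> 0\<close> f_pos[OF assms(2)] by simp
  qed
qed

lemma Re_lam_gt_quarter:
  assumes "0 < x0" "w x0 \<noteq> 0"
  shows "1/4 < Re lam"
proof (rule ccontr)
  assume "\<not> 1/4 < Re lam"
  then have P_gt: "Re lam < P x" if "0 < x" for x using P_gt_quarter[OF that] by simp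
  show False
  proof (rule no_decreasing_minorant[OF assms(1), where \<phi> = "\<lambda>x. - Re (h x)"
        and \<phi>' = "\<lambda>x. - ((cmod (w' x))\<^sup>2 + (P x - Re lam) * f x)"])
    fix x :: real assume "0 < x"
    show "((\<lambda>x. - Re (h x)) has_real_derivative - ((cmod (w' x))\<^sup>2 + (P x - Re lam) * f x)) (at x)"
      by (rule DERIV_minus[OF Re_h_deriv[OF \<open>0 < x\<close>]])
    have "0 \<le> (P x - Re lam) * f x"
      using P_gt[OF \<open>0 < x\<close>] f_nonneg[of x] by simp
    then show "- ((cmod (w' x))\<^sup>2 + (P x - Re lam) * f x) \<le> 0"
      using zero_le_power2[of "cmod (w' x)"] by linarith
    show "\<bar>- Re (h x)\<bar> \<le> cmod (h x)" by (simp add: abs_Re_le_cmod)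
  next
    have "0 < (P x0 - Re lam) * f x0"
      using P_gt[OF assms(1)] f_pos[OF assms(2)] by simp
    then show "- ((cmod (w' x0))\<^sup>2 + (P x0 - Re lam) * f x0) < 0"
      using zero_le_power2[of "cmod (w' x0)"] by linarith
  qed
qed

definition energy :: "real \<Rightarrow> real" where
  "energy t = (Re lam - 1/4) * f t + (cmod (w' t))\<^sup>2"

text \<open>The Gronwall exponent: \<open>|energy'| \<le> - \<theta>' * energy\<close> for real \<open>\<lambda> > 1/4\<close>.\<close>

definition \<theta> :: "real \<Rightarrow> real" where
  "\<theta> t = 3 / (4 * sqrt (Re lam - 1/4)) * (cosh t / sinh t)"

lemma norm_w'_sq_deriv:
  assumes "Im lam = 0" "0 < t"
  shows "((\<lambda>t. (cmod (w' t))\<^sup>2) has_real_derivative 2 * (P t - Re lam) * Re (h t)) (at t)"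
proof -
  have "((\<lambda>t. cnj (w' t) * w' t) has_vector_derivative cnj (w' t) * w'' t + cnj (w'' t) * w' t) (at t)"
    by (rule derivative_eq_intros w'_deriv assms refl)+
  from has_field_derivative_Re[OF this]
  have "((\<lambda>t. Re (cnj (w' t) * w' t)) has_real_derivative
      Re (cnj (w' t) * w'' t + cnj (w'' t) * w' t)) (at t)" .
  moreover have "(\<lambda>t. Re (cnj (w' t) * w' t)) = (\<lambda>t. (cmod (w' t))\<^sup>2)"
    by (simp add: fun_eq_iff cnj_mult_self)
  moreover have "lam = of_real (Re lam)"
    using assms(1) by (simp add: complex_eq_iff)
  then have "Re (cnj (w' t) * w'' t + cnj (w'' t) * w' t) = 2 * (P t - Re lam) * Re (h t)"
    unfolding w''_eq[OF assms(2)] h_def by (subst (1 2) \<open>lam = _\<close>) (simp add: algebra_simps assms(1))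
  ultimately show ?thesis by simp
qed

lemma energy_deriv:
  assumes "Im lam = 0" "0 < t"
  shows "(energy has_real_derivative 2 * (P t - 1/4) * Re (h t)) (at t)"
proof -
  have "(energy has_real_derivative
      (Re lam - 1/4) * (2 * Re (h t)) + 2 * (P t - Re lam) * Re (h t)) (at t)"
    unfolding energy_def[abs_def]
    by (intro DERIV_add DERIV_cmult f_deriv norm_w'_sq_deriv assms)
  then show ?thesis by (simp add: algebra_simps)
qed

lemma norm_h_le_energy:
  assumes "1/4 < Re lam"
  shows "cmod (h t) \<le> energy t / (2 * sqrt (Re lam - 1/4))"
proof -
  have "2 * (sqrt (Re lam - 1/4) * cmod (w t)) * cmod (w' t)
      \<le> (sqrt (Re lam - 1/4) * cmod (w t))\<^sup>2 + (cmod (w' t))\<^sup>2"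
    by (rule sum_squares_bound)
  then have "cmod (h t) * (2 * sqrt (Re lam - 1/4)) \<le> energy t"
    using assms by (simp add: energy_def norm_h f_def power_mult_distrib algebra_simps)
  moreover have "0 < 2 * sqrt (Re lam - 1/4)" using assms by simp
  ultimately show ?thesis by (simp add: pos_le_divide_eq)
qed

lemma energy_bounds:
  assumes "Im lam = 0" "1/4 < Re lam" "0 < a" "a \<le> t"
  shows "energy a * exp (- \<theta> a) \<le> energy t" "energy t \<le> energy a * exp (\<theta> a)"
proof -
  define \<kappa> where "\<kappa> = 3 / (4 * sqrt (Re lam - 1/4))"
  have \<kappa>: "0 < \<kappa>" using assms(2) by (simp add: \<kappa>_def)
  have pos: "0 < x" if "x \<in> {a..t}" for x using that assms(3) by simp
  have E: "(energy has_real_derivative 2 * (P x - 1/4) * Re (h x)) (at x)" if "x \<in> {a..t}" for x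
    by (rule energy_deriv[OF assms(1) pos[OF that]])
  have \<Theta>: "(\<theta> has_real_derivative - (\<kappa> / (sinh x)\<^sup>2)) (at x)" if "x \<in> {a..t}" for x
    unfolding \<theta>_def[abs_def] \<kappa>_def[symmetric]
    using DERIV_cmult[OF coth_has_real_derivative, of x \<kappa>] pos[OF that] by simp
  have Q: "\<bar>2 * (P x - 1/4) * Re (h x)\<bar> \<le> \<kappa> / (sinh x)\<^sup>2 * energy x" if x: "x \<in> {a..t}" for x
  proof -
    have "\<bar>2 * (P x - 1/4) * Re (h x)\<bar> = 3 / (2 * (sinh x)\<^sup>2) * \<bar>Re (h x)\<bar>"
      using pos[OF x] by (simp add: P_eq_sinh abs_mult)
    also have "\<dots> \<le> 3 / (2 * (sinh x)\<^sup>2) * (energy x / (2 * sqrt (Re lam - 1/4)))"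
      by (intro mult_left_mono order_trans[OF abs_Re_le_cmod norm_h_le_energy[OF assms(2)]]) auto
    also have "\<dots> = \<kappa> / (sinh x)\<^sup>2 * energy x"
      by (simp add: \<kappa>_def field_simps)
    finally show ?thesis .
  qed
  have "0 \<le> energy t" "0 \<le> \<theta> t"
    using assms(2,3,4) by (simp_all add: energy_def f_nonneg \<theta>_def)
  from gronwall_two_sided[OF assms(4) E \<Theta> Q this]
  show "energy a * exp (- \<theta> a) \<le> energy t" "energy t \<le> energy a * exp (\<theta> a)"
    by simp_all
qed

lemma Re_h_ge_of_energy_ge:
  assumes "0 < a" "a \<le> t" "\<And>x. a < x \<Longrightarrow> x < t \<Longrightarrow> e \<le> energy x"
  shows "Re (h a) + e * (t - a) \<le> Re (h t) + 2 * (Re lam - 1/4) * integral {a..t} f"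
proof -
  define \<mu> where "\<mu> = Re lam - 1/4"
  have "(\<lambda>t. Re (h t) + 2 * \<mu> * integral {a..t} f - e * (t - a)) a
      \<le> (\<lambda>t. Re (h t) + 2 * \<mu> * integral {a..t} f - e * (t - a)) t"
  proof (rule DERIV_nonneg_imp_le[OF assms(2)])
    fix x assume x: "x \<in> {a..t}"
    then have "0 < x" using assms(1) by simp
    have "((\<lambda>t. e * (t - a)) has_real_derivative e) (at x within {a..t})"
      by (auto intro!: derivative_eq_intros)
    then show "((\<lambda>t. Re (h t) + 2 * \<mu> * integral {a..t} f - e * (t - a)) has_real_derivative
        ((cmod (w' x))\<^sup>2 + (P x - Re lam) * f x) + 2 * \<mu> * f x - e) (at x within {a..t})"
      by (intro DERIV_diff DERIV_add DERIV_cmult has_field_derivative_at_within[OF Re_h_deriv[OF \<open>0 < x\<close>]]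
          integral_has_real_derivative_pos[OF continuous_on_f assms(1) x])
  next
    fix x assume x: "a < x" "x < t"
    have "0 \<le> (P x - 1/4) * f x"
      using P_gt_quarter[of x] x assms(1) f_nonneg[of x] by simp
    with assms(3)[OF x] show "0 \<le> ((cmod (w' x))\<^sup>2 + (P x - Re lam) * f x) + 2 * \<mu> * f x - e"
      by (simp add: energy_def \<mu>_def algebra_simps)
  qed
  then show ?thesis by (simp add: \<mu>_def)
qed

lemma Re_lam_le_quarter:
  assumes "Im lam = 0" "0 < x0" "w x0 \<noteq> 0"
  shows "Re lam \<le> 1/4"
proof (rule ccontr)
  assume "\<not> Re lam \<le> 1/4"
  then have gt: "1/4 < Re lam" by simp
  define \<mu> where "\<mu> = Re lam - 1/4"
  have \<mu>: "0 < \<mu>" using gt by (simp add: \<mu>_def)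
  define e where "e = energy x0 * exp (- \<theta> x0)"
  define E where "E = energy x0 * exp (\<theta> x0)"
  have "0 < energy x0"
    using \<mu> f_pos[OF assms(3)] by (simp add: energy_def \<mu>_def[symmetric] add_pos_nonneg)
  then have "0 < e" by (simp add: e_def)
  obtain t where t: "x0 \<le> t" "E / (2 * sqrt \<mu>) - Re (h x0) + 2 * \<mu> * M < e * (t - x0)"
    using exists_gt_linear[OF \<open>0 < e\<close>] by blast
  have "Re (h t) \<le> energy t / (2 * sqrt \<mu>)"
    using abs_Re_le_cmod[of "h t"] norm_h_le_energy[OF gt, of t] by (simp add: \<mu>_def)
  also have "\<dots> \<le> E / (2 * sqrt \<mu>)"
    using energy_bounds(2)[OF assms(1) gt assms(2) t(1)] \<mu>
    by (intro divide_right_mono) (simp_all add: E_def)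
  finally have "Re (h t) \<le> E / (2 * sqrt \<mu>)" .
  moreover have "Re (h x0) + e * (t - x0) \<le> Re (h t) + 2 * \<mu> * integral {x0..t} f"
    unfolding \<mu>_def e_def
    by (rule Re_h_ge_of_energy_ge[OF assms(2) t(1) energy_bounds(1)[OF assms(1) gt assms(2)]]) simp
  moreover have "2 * \<mu> * integral {x0..t} f \<le> 2 * \<mu> * M"
    using integral_f_le_M[OF assms(2)] \<mu> by simp
  ultimately show False using t(2) by linarith
qed

lemma vanishes:
  assumes "0 < x"
  shows "w x = 0"
proof (rule ccontr)
  assume "w x \<noteq> 0"
  with assms have "Im lam = 0" by (rule Im_lam_eq_0)
  with Re_lam_gt_quarter[OF assms \<open>w x \<noteq> 0\<close>] Re_lam_le_quarter[OF _ assms \<open>w x \<noteq> 0\<close>]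
  show False by simp
qed

end

theorem theoremA1:
  fixes lam :: complex
  shows "\<not> (\<exists>w w' w'' :: real \<Rightarrow> complex.
            (\<forall>x>0. (w has_vector_derivative w' x) (at x)) \<and>
            (\<forall>x>0. (w' has_vector_derivative w'' x) (at x)) \<and>
            (\<forall>x>0. - w'' x + complex_of_real (P x) * w x = lam * w x) \<and>
            set_integrable lborel {0<..} (\<lambda>x. (cmod (w x))\<^sup>2) \<and>
            (\<exists>x>0. w x \<noteq> 0))"
proof (intro notI, elim exE conjE)
  fix w w' w'' :: "real \<Rightarrow> complex" and x :: real
  assume "\<forall>x>0. (w has_vector_derivative w' x) (at x)"
    "\<forall>x>0. (w' has_vector_derivative w'' x) (at x)"
    "\<forall>x>0. - w'' x + complex_of_real (P x) * w x = lam * w x"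
    "set_integrable lborel {0<..} (\<lambda>x. (cmod (w x))\<^sup>2)"
  then have "L2_solution w w' w'' lam"
    by (simp add: L2_solution_def)
  moreover assume "0 < x" "w x \<noteq> 0"
  ultimately show False
    using L2_solution.vanishes by blast
qed

end
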